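(* Let $k>2$ be even, let $\pi=(1\,2\,\cdots\,k)\in\mathbb{S}_k$, $\mathcal{O}_\pi$ its conjugacy class (the $k$-cycles), so that $\mathbb{S}_k^\pi=\langle\pi\rangle\cong\mathbb{Z}_k$. For a $k$-th root of unity $\omega$ let $\chi_\omega$ be the character of $\langle\pi\rangle$ with $\chi_\omega(\pi)=\omega$. Then $\dim\mathfrak{B}(\mathcal{O}_\pi,\chi_\omega)=\infty$ if $\omega\ne-1$, and the braiding of $M(\mathcal{O}_\pi,\chi_\omega)$ is negative if $\omega=-1$.
   Context: Permutations are composed right to left. For a finite group $G$, a conjugacy class $\mathcal{C}$ of $G$, a fixed $s\in\mathcal{C}$ with centralizer $G^s$ and an irreducible representation $(\rho,V)$ of $G^s$, $M(\mathcal{C},\rho)$ is the irreducible Yetter–Drinfeld module over $\mathbb{C}G$: enumerate $\mathcal{C}=\{t_1=s,\dots,t_M\}$, choose $g_i\in G$ with $g_isg_i^{-1}=t_i$; then $M(\mathcal{C},\rho)=\bigoplus_i g_i\otimes V$ with grading $\deg(g_i\otimes v)=t_i$, action $g\cdot(g_i\otimes v)=g_j\otimes\rho(\gamma)v$ where $gg_i=g_j\gamma$, $\gamma\in G^s$, and braiding $c((g_i\otimes v)\otimes(g_j\otimes w))=(g_h\otimes\rho(\gamma)w)\otimes(g_i\otimes v)$ where $t_ig_j=g_h\gamma$, $\gamma\in G^s$. $\mathfrak{B}(\mathcal{C},\rho)$ is the Nichols algebra of this braided vector space. When $\rho$ is one-dimensional, the braiding is called negative if for all $i,j$ with $t_it_j=t_jt_i$,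 setting $q_{ij}:=\rho(g_j^{-1}t_ig_j)$, one has $q_{ii}=-1$ and $q_{ij}q_{ji}=1$. *)

theory Defs
  imports Main "HOL-Library.Extended_Nat" "HOL-Combinatorics.Permutations" "HOL-Library.Function_Algebras"
begin

type_synonym perm = "nat \<Rightarrow> nat"

definition Sk :: "nat \<Rightarrow> perm set" where
  "Sk k = {p. p permutes {1..k}}"

text \<open>pi = (1 2 ... k); permutations are functions, composed right to left by (o).\<close>
definition kcycle :: "nat \<Rightarrow> perm" where
  "kcycle k = (\<lambda>i. if 1 \<le> i \<and> i < k then i + 1 else if i = k then 1 else i)"

definition conj_class :: "perm set \<Rightarrow> perm \<Rightarrow> perm set" where
  "conj_class G s = {g \<circ> s \<circ> inv g | g. g \<in> G}"

definition chi :: "nat \<Rightarrow> complex \<Rightarrow> perm \<Rightarrow> complex" where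
  "chi k \<omega> \<gamma> = \<omega> ^ (LEAST j. (kcycle k ^^ j) = \<gamma>)"

text \<open>Basis vector indexed by t in C is g_t (x) 1.  Given the choice g of the g_i and rho,
  c(x_t (x) x_u) = rho(gamma) x_{t u t^-1} (x) x_t where t g_u = g_{t u t^-1} gamma.\<close>
definition yd_coeff :: "(perm \<Rightarrow> perm) \<Rightarrow> (perm \<Rightarrow> complex) \<Rightarrow> perm \<Rightarrow> perm \<Rightarrow> complex" where
  "yd_coeff g \<rho> t u = \<rho> (inv (g (t \<circ> u \<circ> inv t)) \<circ> t \<circ> g u)"

definition rack_conj :: "perm \<Rightarrow> perm \<Rightarrow> perm" where
  "rack_conj t u = t \<circ> u \<circ> inv t"

text \<open>V^{(x)n} has basis the words of length n over the index set X; vectors are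
  coefficient functions on words.  Linear maps are given by their values on basis words.\<close>

definition words :: "'a set \<Rightarrow> nat \<Rightarrow> 'a list set" where
  "words X n = {w. length w = n \<and> set w \<subseteq> X}"

definition single :: "'a list \<Rightarrow> 'a list \<Rightarrow> complex" where
  "single w = (\<lambda>w'. if w' = w then 1 else 0)"

definition lin :: "'a set \<Rightarrow> nat \<Rightarrow> ('a list \<Rightarrow> 'a list \<Rightarrow> complex)
     \<Rightarrow> ('a list \<Rightarrow> complex) \<Rightarrow> 'a list \<Rightarrow> complex" where
  "lin X n F v = (\<lambda>w'. \<Sum>w\<in>words X n. v w * F w w')"

text \<open>braiding c acting on tensor positions i, i+1 (0-indexed), on a basis word w.\<close>
definition bgen :: "('a \<Rightarrow> 'a \<Rightarrow> 'a) \<Rightarrow> ('a \<Rightarrow> 'a \<Rightarrow> complex) \<Rightarrow> nat \<Rightarrow> 'a list \<Rightarrow> 'a list \<Rightarrow> complex" where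
  "bgen r q i w = (if Suc i < length w then
      (\<lambda>w'. if w' = w[i := r (w!i) (w!Suc i), Suc i := w!i] then q (w!i) (w!Suc i) else 0)
    else single w)"

text \<open>chain n j = c_{n-1} c_{n-2} ... c_{n-j} on V^{(x)n} (1-indexed c_m acts on positions m, m+1).\<close>
fun chain :: "'a set \<Rightarrow> ('a \<Rightarrow> 'a \<Rightarrow> 'a) \<Rightarrow> ('a \<Rightarrow> 'a \<Rightarrow> complex) \<Rightarrow> nat \<Rightarrow> nat
     \<Rightarrow> 'a list \<Rightarrow> 'a list \<Rightarrow> complex" where
  "chain X r q n 0 w = single w"
| "chain X r q n (Suc j) w = lin X n (chain X r q n j) (bgen r q (n - j - 2) w)"

definition Tn :: "'a set \<Rightarrow> ('a \<Rightarrow> 'a \<Rightarrow> 'a) \<Rightarrow> ('a \<Rightarrow> 'a \<Rightarrow> complex) \<Rightarrow> nat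
     \<Rightarrow> 'a list \<Rightarrow> 'a list \<Rightarrow> complex" where
  "Tn X r q n w = (\<lambda>w'. \<Sum>j<n. chain X r q n j w w')"

text \<open>F (x) id on basis words of length n+1, for F on words of length n.\<close>
definition ext_id :: "('a list \<Rightarrow> 'a list \<Rightarrow> complex) \<Rightarrow> 'a list \<Rightarrow> 'a list \<Rightarrow> complex" where
  "ext_id F w = (\<lambda>w'. if w' \<noteq> [] \<and> w \<noteq> [] \<and> last w' = last w
                       then F (butlast w) (butlast w') else 0)"

text \<open>Quantum symmetrizer: Omega_0 = id, Omega_{n+1} = (Omega_n (x) id) T_{n+1}
  (= sum over S_{n+1} of the Matsumoto lifts of the braiding).\<close>
fun qsym :: "'a set \<Rightarrow> ('a \<Rightarrow> 'a \<Rightarrow> 'a) \<Rightarrow> ('a \<Rightarrow> 'a \<Rightarrow> complex) \<Rightarrow> nat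
     \<Rightarrow> 'a list \<Rightarrow> 'a list \<Rightarrow> complex" where
  "qsym X r q 0 w = single w"
| "qsym X r q (Suc n) w = lin X (Suc n) (ext_id (qsym X r q n)) (Tn X r q (Suc n) w)"

definition fscale :: "complex \<Rightarrow> ('a list \<Rightarrow> complex) \<Rightarrow> 'a list \<Rightarrow> complex" where
  "fscale c f = (\<lambda>x. c * f x)"

text \<open>B^n = V^{(x)n} / ker Omega_n, isomorphic to the image of Omega_n.\<close>
definition nichols_comp :: "'a set \<Rightarrow> ('a \<Rightarrow> 'a \<Rightarrow> 'a) \<Rightarrow> ('a \<Rightarrow> 'a \<Rightarrow> complex) \<Rightarrow> nat
     \<Rightarrow> ('a list \<Rightarrow> complex) set" where
  "nichols_comp X r q n = Modules.module.span fscale {qsym X r q n w | w. w \<in> words X n}"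

definition nichols_dim :: "'a set \<Rightarrow> ('a \<Rightarrow> 'a \<Rightarrow> 'a) \<Rightarrow> ('a \<Rightarrow> 'a \<Rightarrow> complex) \<Rightarrow> enat" where
  "nichols_dim X r q =
     (SUP N. enat (\<Sum>n<N. Vector_Spaces.vector_space.dim fscale (nichols_comp X r q n)))"

definition negative_braiding :: "perm set \<Rightarrow> (perm \<Rightarrow> perm) \<Rightarrow> (perm \<Rightarrow> complex) \<Rightarrow> bool" where
  "negative_braiding C g \<rho> \<longleftrightarrow>
     (\<forall>t\<in>C. \<forall>u\<in>C. t \<circ> u = u \<circ> t \<longrightarrow>
        \<rho> (inv (g t) \<circ> t \<circ> g t) = -1 \<and>
        \<rho> (inv (g u) \<circ> t \<circ> g u) * \<rho> (inv (g t) \<circ> u \<circ> g t) = 1)"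

end

theory Submission
  imports Defs
begin

text \<open>The \<open>k\<close>-cycles \<open>\<pi>\<close> and \<open>\<pi>\<^sup>-\<^sup>1\<close> commute, so on them the rack action is trivial and the
  braiding is diagonal, with \<open>q(\<pi>,\<pi>) = q(\<pi>\<^sup>-\<^sup>1,\<pi>\<^sup>-\<^sup>1) = \<omega>\<close> and \<open>q(\<pi>,\<pi>\<^sup>-\<^sup>1) = q(\<pi>\<^sup>-\<^sup>1,\<pi>) = \<omega>\<^sup>-\<^sup>1\<close>.
  On words in such letters the quantum symmetrizer satisfies \<open>(\<Omega>\<^sub>n\<^sub>+\<^sub>1 v)(y a) = (\<Omega>\<^sub>n \<partial>\<^sub>a v)(y)\<close>
  for the skew derivation \<open>\<partial>\<^sub>a\<close>, so \<open>\<Omega>\<^sub>n \<noteq> 0\<close> in every degree as soon as a family of vectors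
  keeps surviving iterated skew derivations: the powers \<open>\<pi>\<^sup>n\<close> if \<open>\<omega> = 1\<close>, and the powers of
  \<open>\<pi> \<pi>\<^sup>-\<^sup>1 - \<omega>\<^sup>-\<^sup>1 \<pi>\<^sup>-\<^sup>1 \<pi>\<close> if \<open>\<omega>\<^sup>2 \<noteq> 1\<close>.
  For \<open>\<omega> = -1\<close>: if two \<open>k\<close>-cycles \<open>t, u\<close> commute, then \<open>g\<^sub>u\<^sup>-\<^sup>1 t g\<^sub>u\<close> centralizes \<open>\<pi>\<close>, hence
  is a power \<open>\<pi>\<^sup>j\<close>; as it is itself a \<open>k\<close>-cycle and \<open>k\<close> is even, \<open>j\<close> is odd, so \<open>\<chi>\<^sub>-\<^sub>1\<close>
  takes the value \<open>-1\<close> on it.\<close>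

section \<open>Skew derivations on the tensor algebra\<close>

text \<open>As in \<open>lin\<close>, elements of the tensor algebra are coefficient functions on words:
  \<open>lmult x f\<close> is the product \<open>x f\<close>, and \<open>skew_der q a\<close> is the skew derivation \<open>\<partial>\<^sub>a\<close> of the
  diagonal braiding \<open>q\<close>.\<close>

definition lmult :: "'a \<Rightarrow> ('a list \<Rightarrow> complex) \<Rightarrow> 'a list \<Rightarrow> complex" where
  "lmult x f = (\<lambda>y. case y of [] \<Rightarrow> 0 | b # y' \<Rightarrow> if b = x then f y' else 0)"

definition qword :: "('a \<Rightarrow> 'a \<Rightarrow> complex) \<Rightarrow> 'a \<Rightarrow> 'a list \<Rightarrow> complex" where
  "qword q a y = prod_list (map (q a) y)"

definition twist :: "('a \<Rightarrow> 'a \<Rightarrow> complex) \<Rightarrow> 'a \<Rightarrow> ('a list \<Rightarrow> complex) \<Rightarrow> 'a list \<Rightarrow> complex" where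
  "twist q a f = (\<lambda>y. qword q a y * f y)"

definition skew_der :: "('a \<Rightarrow> 'a \<Rightarrow> complex) \<Rightarrow> 'a \<Rightarrow> ('a list \<Rightarrow> complex) \<Rightarrow> 'a list \<Rightarrow> complex" where
  "skew_der q a f = (\<lambda>y. \<Sum>p\<le>length y. f (take p y @ a # drop p y) * qword q a (drop p y))"

definition in_tensor_power :: "'a set \<Rightarrow> nat \<Rightarrow> ('a list \<Rightarrow> complex) \<Rightarrow> bool" where
  "in_tensor_power S n v \<longleftrightarrow> (\<forall>w. v w \<noteq> 0 \<longrightarrow> w \<in> words S n)"

lemma lmult_Nil [simp]: "lmult x f [] = 0"
  and lmult_Cons [simp]: "lmult x f (b # y) = (if b = x then f y else 0)"
  by (simp_all add: lmult_def)

lemma qword_Nil [simp]: "qword q a [] = 1"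
  and qword_Cons [simp]: "qword q a (b # y) = q a b * qword q a y"
  by (simp_all add: qword_def)

lemma skew_der_lmult:
  "skew_der q a (lmult x f) = (\<lambda>y. (if a = x then twist q a f y else 0) + lmult x (skew_der q a f) y)"
proof
  fix y
  show "skew_der q a (lmult x f) y = (if a = x then twist q a f y else 0) + lmult x (skew_der q a f) y"
  proof (cases y)
    case Nil
    then show ?thesis by (simp add: skew_der_def twist_def)
  next
    case (Cons b y')
    have "skew_der q a (lmult x f) y = lmult x f (a # b # y') * qword q a (b # y') +
       (\<Sum>p\<le>length y'. lmult x f (take (Suc p) (b # y') @ a # drop (Suc p) (b # y'))
                          * qword q a (drop (Suc p) (b # y')))"
      unfolding skew_der_def Cons by (simp only: length_Cons sum.atMost_Suc_shift take_0 drop_0 append_Nil)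
    also have "\<dots> = (if a = x then twist q a f y else 0) + lmult x (skew_der q a f) y"
      by (simp add: Cons twist_def skew_der_def sum_distrib_left)
    finally show ?thesis .
  qed
qed

lemma twist_lmult: "twist q a (lmult x f) = (\<lambda>y. q a x * lmult x (twist q a f) y)"
  by (rule ext) (simp add: twist_def lmult_def split: list.split)

lemma skew_der_single_Nil: "skew_der q a (single []) = (\<lambda>y. 0)"
  by (simp add: skew_der_def single_def)

lemma twist_single_Nil: "twist q a (single []) = single []"
  by (auto simp: twist_def single_def)

lemma skew_der_add: "skew_der q a (\<lambda>y. f y + g y) y = skew_der q a f y + skew_der q a g y"
  and skew_der_diff: "skew_der q a (\<lambda>y. f y - g y) y = skew_der q a f y - skew_der q a g y"
  and skew_der_scale: "skew_der q a (\<lambda>y. c * f y) y = c * skew_der q a f y"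
  and skew_der_zero: "skew_der q a (\<lambda>y. 0) y = 0"
  by (simp_all add: skew_der_def sum.distrib sum_subtractf sum_distrib_left algebra_simps)

lemma lmult_add: "lmult x (\<lambda>y. f y + g y) y = lmult x f y + lmult x g y"
  and lmult_diff: "lmult x (\<lambda>y. f y - g y) y = lmult x f y - lmult x g y"
  and lmult_scale: "lmult x (\<lambda>y. c * f y) y = c * lmult x f y"
  and lmult_zero: "lmult x (\<lambda>y. 0) y = 0"
  by (cases y; simp)+

lemma twist_add: "twist q a (\<lambda>y. f y + g y) y = twist q a f y + twist q a g y"
  and twist_diff: "twist q a (\<lambda>y. f y - g y) y = twist q a f y - twist q a g y"
  and twist_scale: "twist q a (\<lambda>y. c * f y) y = c * twist q a f y"
  by (simp_all add: twist_def algebra_simps)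

lemmas tensor_linear_simps = skew_der_add skew_der_diff skew_der_scale skew_der_zero
  lmult_add lmult_diff lmult_scale lmult_zero twist_add twist_diff twist_scale
  skew_der_lmult twist_lmult

lemma skew_der_in_tensor_power:
  assumes "a \<in> S" and "in_tensor_power S (Suc n) v"
  shows "in_tensor_power S n (skew_der q a v)"
  unfolding in_tensor_power_def
proof (intro allI impI)
  fix y assume "skew_der q a v y \<noteq> 0"
  then obtain p where p: "p \<le> length y" "v (take p y @ a # drop p y) \<noteq> 0"
    unfolding skew_der_def by (metis (no_types, lifting) atMost_iff mult_eq_0_iff sum.neutral)
  then have "take p y @ a # drop p y \<in> words S (Suc n)"
    using assms(2) by (auto simp: in_tensor_power_def)
  moreover have "set y = set (take p y) \<union> set (drop p y)"
    by (metis append_take_drop_id set_append)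
  ultimately show "y \<in> words S n" using p(1) by (auto simp: words_def)
qed

fun letter_pow :: "'a \<Rightarrow> nat \<Rightarrow> 'a list \<Rightarrow> complex" where
  "letter_pow t 0 = single []"
| "letter_pow t (Suc n) = lmult t (letter_pow t n)"

lemma letter_pow_in_tensor_power: "in_tensor_power {t} n (letter_pow t n)"
proof (induction n)
  case 0
  then show ?case by (simp add: in_tensor_power_def single_def words_def)
next
  case (Suc n)
  then show ?case by (auto simp: in_tensor_power_def words_def lmult_def split: list.splits if_splits)
qed

lemma twist_letter_pow: "twist q t (letter_pow t n) = (\<lambda>y. q t t ^ n * letter_pow t n y)"
  by (induction n) (simp_all add: twist_single_Nil twist_lmult lmult_scale mult.assoc)

lemma skew_der_letter_pow:
  assumes "q t t = 1"
  shows "skew_der q t (letter_pow t (Suc n)) = (\<lambda>y. of_nat (Suc n) * letter_pow t n y)"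
proof (induction n)
  case 0
  then show ?case by (simp add: skew_der_lmult twist_single_Nil skew_der_single_Nil lmult_zero)
next
  case (Suc n)
  have "skew_der q t (letter_pow t (Suc (Suc n)))
      = (\<lambda>y. twist q t (letter_pow t (Suc n)) y + lmult t (skew_der q t (letter_pow t (Suc n))) y)"
    by (simp only: letter_pow.simps(2)[of t "Suc n"] skew_der_lmult) simp
  also have "\<dots> = (\<lambda>y. of_nat (Suc (Suc n)) * letter_pow t (Suc n) y)"
    unfolding Suc twist_letter_pow assms
    by (simp only: lmult_scale letter_pow.simps(2)[symmetric]) (simp add: algebra_simps)
  finally show ?case .
qed

definition qcomm_mult :: "('a \<Rightarrow> 'a \<Rightarrow> complex) \<Rightarrow> 'a \<Rightarrow> 'a \<Rightarrow> ('a list \<Rightarrow> complex) \<Rightarrow> 'a list \<Rightarrow> complex" where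
  "qcomm_mult q t u f = (\<lambda>y. lmult t (lmult u f) y - q t u * lmult u (lmult t f) y)"

fun qcomm_pow :: "('a \<Rightarrow> 'a \<Rightarrow> complex) \<Rightarrow> 'a \<Rightarrow> 'a \<Rightarrow> nat \<Rightarrow> 'a list \<Rightarrow> complex" where
  "qcomm_pow q t u 0 = single []"
| "qcomm_pow q t u (Suc n) = qcomm_mult q t u (qcomm_pow q t u n)"

lemma qcomm_mult_scale: "qcomm_mult q t u (\<lambda>y. c * f y) = (\<lambda>y. c * qcomm_mult q t u f y)"
  and qcomm_mult_zero: "qcomm_mult q t u (\<lambda>y. 0) = (\<lambda>y. 0)"
  by (auto simp: qcomm_mult_def lmult_def algebra_simps fun_eq_iff split: list.split)

lemma qcomm_pow_in_tensor_power: "in_tensor_power {t, u} (2 * n) (qcomm_pow q t u n)"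
proof (induction n)
  case 0
  then show ?case by (simp add: in_tensor_power_def single_def words_def)
next
  case (Suc n)
  show ?case
    unfolding in_tensor_power_def
  proof (intro allI impI)
    fix y assume "qcomm_pow q t u (Suc n) y \<noteq> 0"
    then obtain y' where y: "y = t # u # y' \<or> y = u # t # y'" and "qcomm_pow q t u n y' \<noteq> 0"
      by (cases y rule: remdups_adj.cases) (auto simp: qcomm_mult_def split: if_splits)
    then have "y' \<in> words {t, u} (2 * n)" using Suc by (auto simp: in_tensor_power_def)
    with y show "y \<in> words {t, u} (2 * Suc n)" by (auto simp: words_def)
  qed
qed

lemma twist_qcomm_pow:
  "twist q a (qcomm_pow q t u n) = (\<lambda>y. (q a t * q a u) ^ n * qcomm_pow q t u n y)"
proof (induction n)
  case 0
  then show ?case by (simp add: twist_single_Nil)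
next
  case (Suc n)
  have "twist q a (qcomm_mult q t u f) = (\<lambda>y. (q a t * q a u) * qcomm_mult q t u (twist q a f) y)" for f
    unfolding qcomm_mult_def by (rule ext) (simp add: tensor_linear_simps algebra_simps)
  with Suc show ?case by (simp add: qcomm_mult_scale mult.assoc)
qed

lemma skew_der_qcomm_mult_left:
  assumes "t \<noteq> u"
  shows "skew_der q t (qcomm_mult q t u f) = qcomm_mult q t u (skew_der q t f)"
  unfolding qcomm_mult_def by (rule ext) (simp add: assms tensor_linear_simps algebra_simps)

lemma skew_der_qcomm_pow_left:
  assumes "t \<noteq> u"
  shows "skew_der q t (qcomm_pow q t u n) = (\<lambda>y. 0)"
  by (induction n) (simp_all add: skew_der_single_Nil skew_der_qcomm_mult_left[OF assms] qcomm_mult_zero)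

lemma skew_der_qcomm_mult_right:
  assumes "t \<noteq> u"
  shows "skew_der q u (qcomm_mult q t u f)
    = (\<lambda>y. (1 - q t u * q u t) * lmult t (twist q u f) y + qcomm_mult q t u (skew_der q u f) y)"
  unfolding qcomm_mult_def by (rule ext) (simp add: assms tensor_linear_simps algebra_simps)

text \<open>The balance condition makes the twists by \<open>q t\<close> and \<open>q u\<close> cancel on
  \<open>(t u - q t u u t)\<^sup>n\<close>, so \<open>\<partial>\<^sub>t \<partial>\<^sub>u\<close> acts on these powers like an ordinary derivative.\<close>

lemma skew_der_skew_der_qcomm_pow:
  assumes "t \<noteq> u" and balanced: "q t t * q t u * q u t * q u u = 1"
  shows "skew_der q t (skew_der q u (qcomm_pow q t u (Suc n)))
    = (\<lambda>y. of_nat (Suc n) * (1 - q t u * q u t) * qcomm_pow q t u n y)"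
proof (induction n)
  case 0
  show ?case
    using assms by (simp add: skew_der_qcomm_mult_right twist_single_Nil skew_der_single_Nil
        qcomm_mult_zero tensor_linear_simps)
next
  case (Suc n)
  let ?Z = "qcomm_pow q t u (Suc n)" and ?c = "1 - q t u * q u t"
  have der_u: "skew_der q u (qcomm_pow q t u (Suc (Suc n)))
     = (\<lambda>y. ?c * ((q u t * q u u) ^ Suc n * lmult t ?Z y) + qcomm_mult q t u (skew_der q u ?Z) y)"
    by (simp only: qcomm_pow.simps(2)[of q t u "Suc n"] skew_der_qcomm_mult_right[OF assms(1)]
        twist_qcomm_pow lmult_scale)
  have "skew_der q t (skew_der q u (qcomm_pow q t u (Suc (Suc n))))
     = (\<lambda>y. ?c * ((q u t * q u u) ^ Suc n * (q t t * q t u) ^ Suc n) * ?Z y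
            + of_nat (Suc n) * ?c * ?Z y)"
    unfolding der_u
    by (rule ext) (simp only: skew_der_add skew_der_scale skew_der_lmult if_True twist_qcomm_pow
        skew_der_qcomm_pow_left[OF assms(1)] lmult_zero add_0_right skew_der_qcomm_mult_left[OF assms(1)]
        Suc qcomm_mult_scale qcomm_pow.simps(2)[symmetric] simp_thms mult.assoc)
  also have "(q u t * q u u) ^ Suc n * (q t t * q t u) ^ Suc n = 1"
    using balanced by (simp only: power_mult_distrib[symmetric] mult_ac power_one)
  also have "(\<lambda>y. ?c * 1 * ?Z y + of_nat (Suc n) * ?c * ?Z y) = (\<lambda>y. of_nat (Suc (Suc n)) * ?c * ?Z y)"
    by (simp add: algebra_simps del: qcomm_pow.simps)
  finally show ?case .
qed

section \<open>The quantum symmetrizer on a trivially braided subset\<close>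

definition move_last :: "nat \<Rightarrow> 'a list \<Rightarrow> 'a list" where
  "move_last p w = take p w @ drop (Suc p) w @ [w ! p]"

lemma move_last_split: "length xs = p \<Longrightarrow> move_last p (xs @ a # zs) = xs @ zs @ [a]"
  by (simp add: move_last_def nth_append)

lemma snoc_eq_move_last_iff:
  assumes "p < length w"
  shows "y @ [a] = move_last p w \<longleftrightarrow> p \<le> length y \<and> w = take p y @ a # drop p y"
proof
  assume "y @ [a] = move_last p w"
  then have a: "a = w ! p" and y: "y = take p w @ drop (Suc p) w" by (auto simp: move_last_def)
  then have "take p y = take p w" "drop p y = drop (Suc p) w" using assms by simp_all
  then show "p \<le> length y \<and> w = take p y @ a # drop p y"
    using y assms a by (simp add: id_take_nth_drop[symmetric])
next
  assume "p \<le> length y \<and> w = take p y @ a # drop p y"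
  then show "y @ [a] = move_last p w" using move_last_split[of "take p y" p a "drop p y"] by simp
qed

lemma finite_words: "finite X \<Longrightarrow> finite (words X n)"
  unfolding words_def using finite_lists_length_eq[of X n] by (simp add: conj_commute)

lemma words_0: "words X 0 = {[]}"
  by (auto simp: words_def)

lemma lin_single:
  assumes "finite X" and "w \<in> words X n"
  shows "lin X n F (\<lambda>w'. if w' = w then c else 0) = (\<lambda>z. c * F w z)"
proof
  fix z
  have "(\<Sum>w'\<in>words X n. (if w' = w then c else 0) * F w' z) = (\<Sum>w'\<in>words X n. if w' = w then c * F w' z else 0)"
    by (rule sum.cong) auto
  also have "\<dots> = c * F w z" using assms by (simp add: finite_words)
  finally show "lin X n F (\<lambda>w'. if w' = w then c else 0) z = c * F w z" by (simp add: lin_def)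
qed

lemma lin_scale: "lin X n F (\<lambda>y. c * f y) = (\<lambda>y. c * lin X n F f y)"
  by (simp add: lin_def sum_distrib_left mult.assoc)

text \<open>Since \<open>\<Omega>\<^sub>n\<^sub>+\<^sub>1 = (\<Omega>\<^sub>n \<otimes> id) T\<^sub>n\<^sub>+\<^sub>1\<close>, the coefficients of \<open>\<Omega>\<^sub>n\<^sub>+\<^sub>1 v\<close> at words ending in \<open>a\<close>
  are those of \<open>\<Omega>\<^sub>n\<close> applied to the \<open>a\<close>-part of \<open>T\<^sub>n\<^sub>+\<^sub>1 v\<close>.\<close>

lemma lin_qsym_Suc_snoc:
  assumes fin: "finite X" and a: "a \<in> X"
  shows "lin X (Suc n) (qsym X r q (Suc n)) v (y @ [a])
    = lin X n (qsym X r q n) (\<lambda>y'. lin X (Suc n) (Tn X r q (Suc n)) v (y' @ [a])) y"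
proof -
  let ?T = "Tn X r q (Suc n)" and ?snoc = "\<lambda>y'. y' @ [a]"
  have snoc_words: "?snoc ` words X n \<subseteq> words X (Suc n)" using a by (auto simp: words_def)
  have ext_id_zero: "ext_id (qsym X r q n) w (y @ [a]) = 0" if "w \<in> words X (Suc n) - ?snoc ` words X n" for w
  proof -
    have "w \<noteq> []" using that by (auto simp: words_def)
    moreover have "butlast w \<in> words X n" using that by (auto simp: words_def dest: in_set_butlastD)
    ultimately have "last w \<noteq> a" using that by (metis DiffD2 append_butlast_last_id image_eqI)
    then show ?thesis by (simp add: ext_id_def)
  qed
  have "(\<Sum>w'\<in>words X (Suc n). ?T w w' * ext_id (qsym X r q n) w' (y @ [a]))
      = (\<Sum>y'\<in>words X n. ?T w (y' @ [a]) * qsym X r q n y' y)" for w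
  proof -
    have "(\<Sum>y'\<in>words X n. ?T w (y' @ [a]) * qsym X r q n y' y)
        = (\<Sum>w'\<in>?snoc ` words X n. ?T w w' * ext_id (qsym X r q n) w' (y @ [a]))"
      by (simp add: sum.reindex inj_on_def ext_id_def)
    also have "\<dots> = (\<Sum>w'\<in>words X (Suc n). ?T w w' * ext_id (qsym X r q n) w' (y @ [a]))"
      using ext_id_zero by (intro sum.mono_neutral_left[OF finite_words[OF fin] snoc_words]) auto
    finally show ?thesis by simp
  qed
  then have "lin X (Suc n) (qsym X r q (Suc n)) v (y @ [a])
      = (\<Sum>w\<in>words X (Suc n). v w * (\<Sum>y'\<in>words X n. ?T w (y' @ [a]) * qsym X r q n y' y))"
    by (simp add: lin_def)
  also have "\<dots> = (\<Sum>y'\<in>words X n. (\<Sum>w\<in>words X (Suc n). v w * ?T w (y' @ [a])) * qsym X r q n y' y)"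
    by (simp add: sum_distrib_left sum_distrib_right mult.assoc) (rule sum.swap)
  finally show ?thesis by (simp add: lin_def)
qed

text \<open>On a subset \<open>S\<close> on which the rack action is trivial, \<open>c\<close> only rescales basis words, so
  \<open>c\<^sub>n\<^sub>-\<^sub>1 \<cdots> c\<^sub>p\<^sub>+\<^sub>1\<close> moves the letter at position \<open>p\<close> to the end, collecting the factors
  \<open>q (w!p) b\<close> for the letters \<open>b\<close> it passes.\<close>

context
  fixes X S :: "'a set" and r :: "'a \<Rightarrow> 'a \<Rightarrow> 'a"
  assumes finite_X: "finite X" and S_subset: "S \<subseteq> X"
    and trivial_on_S: "\<forall>a\<in>S. \<forall>b\<in>S. r a b = b"
begin

lemma chain_eq_move_last:
  assumes "j < n" and "w \<in> words S n"
  shows "chain X r q n j w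
    = (\<lambda>w'. if w' = move_last (n - Suc j) w then qword q (w ! (n - Suc j)) (drop (n - j) w) else 0)"
  using assms
proof (induction j arbitrary: w)
  case 0
  then obtain m where n: "n = Suc m" and len: "length w = Suc m"
    by (cases n) (auto simp: words_def)
  then have "w = take m w @ [w ! m]"
    by (metis lessI take_Suc_conv_app_nth take_all_iff order_refl)
  then have "move_last m w = w"
    using move_last_split[of "take m w" m "w ! m" "[]"] len by simp
  moreover have "drop n w = []" using len n by simp
  ultimately show ?case using n by (simp add: single_def fun_eq_iff)
next
  case (Suc j)
  from Suc.prems have len: "length w = n" and set_w: "set w \<subseteq> S" by (auto simp: words_def)
  define i where "i = n - Suc (Suc j)"
  have i: "Suc i < n" "n - j - 2 = i" "n - Suc j = Suc i" "n - j = Suc (Suc i)" using Suc.prems(1) by (auto simp: i_def)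
  obtain xs a b ys where w: "w = xs @ a # b # ys" and xs: "length xs = i"
    using i(1) len by (metis Cons_nth_drop_Suc Suc_lessD append_take_drop_id length_take min_absorb2 less_imp_le_nat)
  have "a \<in> S" "b \<in> S" using set_w w by auto
  then have rab: "r a b = b" using trivial_on_S by blast
  define w1 where "w1 = xs @ b # a # ys"
  have w1: "w1 \<in> words S n" using set_w len w by (auto simp: w1_def words_def)
  then have w1_X: "w1 \<in> words X n" using S_subset by (auto simp: words_def)
  have "bgen r q (n - j - 2) w = (\<lambda>w'. if w' = w1 then q a b else 0)"
    unfolding bgen_def i(2) w w1_def using i(1) len w xs rab
    by (simp add: list_update_append nth_append fun_eq_iff)
  then have "chain X r q n (Suc j) w = (\<lambda>z. q a b * chain X r q n j w1 z)"
    using lin_single[OF finite_X w1_X] by simp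
  also have "chain X r q n j w1 = (\<lambda>w'. if w' = xs @ b # ys @ [a] then qword q a ys else 0)"
    using Suc.IH[OF _ w1] i xs move_last_split[of "xs @ [b]" "Suc i" a ys]
    by (simp add: w1_def nth_append fun_eq_iff)
  also have "move_last i w = xs @ b # ys @ [a]"
    using move_last_split[OF xs] by (simp add: w)
  ultimately show ?case
    using i xs by (simp add: w nth_append fun_eq_iff i_def[symmetric])
qed

lemma Tn_eq_sum_move_last:
  assumes "w \<in> words S n"
  shows "Tn X r q n w w'
    = (\<Sum>p<n. if w' = move_last p w then qword q (w ! p) (drop (Suc p) w) else 0)"
proof -
  have "Tn X r q n w w' = (\<Sum>j<n. if w' = move_last (n - Suc j) w
      then qword q (w ! (n - Suc j)) (drop (Suc (n - Suc j)) w) else 0)"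
    unfolding Tn_def using chain_eq_move_last[OF _ assms] by (auto intro!: sum.cong simp: Suc_diff_Suc)
  also have "\<dots> = (\<Sum>p<n. if w' = move_last p w then qword q (w ! p) (drop (Suc p) w) else 0)"
    by (rule sum.nat_diff_reindex)
  finally show ?thesis .
qed

lemma sum_move_last_eq_snoc:
  assumes p: "p \<le> n" and v: "in_tensor_power S (Suc n) v"
  shows "(\<Sum>w\<in>words S (Suc n). v w * (if y @ [a] = move_last p w then qword q (w ! p) (drop (Suc p) w) else 0))
    = (if p \<le> length y then v (take p y @ a # drop p y) * qword q a (drop p y) else 0)"
  (is "?lhs = ?rhs")
proof -
  let ?W = "words S (Suc n)" and ?w = "take p y @ a # drop p y"
  have "finite ?W" using finite_words finite_X S_subset finite_subset by blast
  have "?lhs = (\<Sum>w\<in>?W. if w = ?w then (if p \<le> length y then v w * qword q a (drop p y) else 0) else 0)"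
  proof (rule sum.cong[OF refl])
    fix w assume "w \<in> ?W"
    then have "p < length w" using p by (simp add: words_def)
    then show "v w * (if y @ [a] = move_last p w then qword q (w ! p) (drop (Suc p) w) else 0)
        = (if w = ?w then (if p \<le> length y then v w * qword q a (drop p y) else 0) else 0)"
      using snoc_eq_move_last_iff[of p w y a] by (auto simp: nth_append)
  qed
  also have "\<dots> = ?rhs"
    using v \<open>finite ?W\<close> by (auto simp: in_tensor_power_def)
  finally show ?thesis .
qed

lemma lin_Tn_snoc:
  assumes a: "a \<in> S" and v: "in_tensor_power S (Suc n) v"
  shows "lin X (Suc n) (Tn X r q (Suc n)) v (y @ [a]) = skew_der q a v y"
proof -
  let ?W = "words S (Suc n)" and ?ins = "\<lambda>p. take p y @ a # drop p y"
  have W_sub: "?W \<subseteq> words X (Suc n)" using S_subset by (auto simp: words_def)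
  have "lin X (Suc n) (Tn X r q (Suc n)) v (y @ [a]) = (\<Sum>w\<in>?W. v w * Tn X r q (Suc n) w (y @ [a]))"
    unfolding lin_def using v
    by (intro sum.mono_neutral_right[OF finite_words[OF finite_X] W_sub]) (auto simp: in_tensor_power_def)
  also have "\<dots> = (\<Sum>p<Suc n. \<Sum>w\<in>?W. v w * (if y @ [a] = move_last p w
                       then qword q (w ! p) (drop (Suc p) w) else 0))"
    by (simp only: Tn_eq_sum_move_last sum_distrib_left cong: sum.cong) (rule sum.swap)
  also have "\<dots> = (\<Sum>p<Suc n. if p \<le> length y then v (?ins p) * qword q a (drop p y) else 0)"
    using sum_move_last_eq_snoc[OF _ v] by (intro sum.cong) auto
  also have "\<dots> = skew_der q a v y"
  proof (cases "length y = n")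
    case True
    then show ?thesis unfolding skew_der_def by (intro sum.cong) auto
  next
    case False
    then have "v (?ins p) = 0" for p
      using v by (force simp: in_tensor_power_def words_def)
    then show ?thesis unfolding skew_der_def by (simp cong: if_cong)
  qed
  finally show ?thesis .
qed

lemma lin_qsym_Suc_snoc_skew_der:
  assumes "a \<in> S" and "in_tensor_power S (Suc n) v"
  shows "lin X (Suc n) (qsym X r q (Suc n)) v (y @ [a]) = lin X n (qsym X r q n) (skew_der q a v) y"
  using lin_qsym_Suc_snoc[OF finite_X, of a] lin_Tn_snoc[OF assms] assms(1) S_subset by auto

lemma lin_qsym_Suc_nonzero:
  assumes "a \<in> S" and "in_tensor_power S (Suc n) v"
    and "lin X n (qsym X r q n) (skew_der q a v) \<noteq> 0"
  shows "lin X (Suc n) (qsym X r q (Suc n)) v \<noteq> 0"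
proof
  assume "lin X (Suc n) (qsym X r q (Suc n)) v = 0"
  then have "lin X n (qsym X r q n) (skew_der q a v) y = 0" for y
    using lin_qsym_Suc_snoc_skew_der[OF assms(1,2), of q y] by simp
  with assms(3) show False by (simp add: fun_eq_iff)
qed

end

section \<open>Criteria for an infinite-dimensional Nichols algebra\<close>

lemma vector_space_fscale: "Vector_Spaces.vector_space (fscale :: complex \<Rightarrow> ('a list \<Rightarrow> complex) \<Rightarrow> _)"
  by unfold_locales (auto simp: fscale_def fun_eq_iff algebra_simps)

lemma nichols_comp_dim_pos:
  assumes fin: "finite X" and nz: "lin X n (qsym X r q n) v \<noteq> 0"
  shows "Vector_Spaces.vector_space.dim fscale (nichols_comp X r q n) \<ge> 1"
proof -
  interpret vs: vector_space "fscale :: complex \<Rightarrow> ('a list \<Rightarrow> complex) \<Rightarrow> _"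
    by (rule vector_space_fscale)
  let ?G = "{qsym X r q n w | w. w \<in> words X n}"
  obtain y where "lin X n (qsym X r q n) v y \<noteq> 0"
    using nz by (auto simp: fun_eq_iff)
  then obtain w where "w \<in> words X n" "qsym X r q n w \<noteq> 0"
    unfolding lin_def by (metis (no_types, lifting) mult_eq_0_iff sum.neutral zero_fun_apply)
  then have G_nonzero: "\<not> ?G \<subseteq> {0}" by blast
  have "vs.dim ?G \<noteq> 0"
  proof
    assume dim0: "vs.dim ?G = 0"
    obtain B where B: "B \<subseteq> ?G" "vs.independent B" "?G \<subseteq> vs.span B" "card B = vs.dim ?G"
      by (rule vs.basis_exists)
    have "finite ?G" using finite_words[OF fin, of n] by (simp add: setcompr_eq_image)
    then have "finite B" using B(1) finite_subset by blast
    then have "B = {}" using B(4) dim0 by simp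
    then show False using B(3) G_nonzero by simp
  qed
  then show ?thesis unfolding nichols_comp_def by simp
qed

lemma nichols_dim_infinite:
  assumes fin: "finite X" and nz: "\<And>n. \<exists>v. lin X n (qsym X r q n) v \<noteq> 0"
  shows "nichols_dim X r q = \<infinity>"
proof (rule ccontr)
  let ?d = "\<lambda>n. Vector_Spaces.vector_space.dim fscale (nichols_comp X r q n)"
  assume "nichols_dim X r q \<noteq> \<infinity>"
  then obtain m where m: "nichols_dim X r q = enat m" by auto
  have "enat (\<Sum>n<Suc m. ?d n) \<le> nichols_dim X r q"
    unfolding nichols_dim_def by (rule SUP_upper) simp
  then have "(\<Sum>n<Suc m. ?d n) \<le> m"
    unfolding m by (simp only: enat_ord_simps)
  moreover have "1 \<le> ?d n" for n
    using nz[of n] nichols_comp_dim_pos[OF fin] by blast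
  then have "(\<Sum>n<Suc m. 1) \<le> (\<Sum>n<Suc m. ?d n)"
    by (intro sum_mono)
  moreover have "(\<Sum>n<Suc m. 1 :: nat) = Suc m" by simp
  ultimately show False by linarith
qed

lemma lin_scale_nonzero: "c \<noteq> 0 \<Longrightarrow> lin X n F f \<noteq> 0 \<Longrightarrow> lin X n F (\<lambda>y. c * f y) \<noteq> 0"
  by (simp add: lin_scale fun_eq_iff)

lemma nichols_dim_infinite_of_loop:
  assumes fin: "finite X" and t: "t \<in> X" and "r t t = t" and "q t t = 1"
  shows "nichols_dim X r q = \<infinity>"
proof (rule nichols_dim_infinite[OF fin])
  have trivial: "\<forall>a\<in>{t}. \<forall>b\<in>{t}. r a b = b" using assms(3) by simp
  fix n
  have "lin X n (qsym X r q n) (letter_pow t n) \<noteq> 0"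
  proof (induction n)
    case 0
    then show ?case by (simp add: lin_def words_0 single_def fun_eq_iff)
  next
    case (Suc n)
    have nz: "lin X n (qsym X r q n) (skew_der q t (letter_pow t (Suc n))) \<noteq> 0"
      unfolding skew_der_letter_pow[of q t, OF assms(4)] using Suc.IH
      by (rule lin_scale_nonzero[rotated]) (simp del: of_nat_Suc)
    show ?case
      by (rule lin_qsym_Suc_nonzero[OF fin _ trivial _ letter_pow_in_tensor_power nz]) (use t in auto)
  qed
  then show "\<exists>v. lin X n (qsym X r q n) v \<noteq> 0" by (rule exI[where x = "letter_pow t n"])
qed

lemma nichols_dim_infinite_of_pair:
  assumes fin: "finite X" and t: "t \<in> X" and u: "u \<in> X" and "t \<noteq> u"
    and trivial: "\<forall>a\<in>{t, u}. \<forall>b\<in>{t, u}. r a b = b"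
    and balanced: "q t t * q t u * q u t * q u u = 1" and ne: "q t u * q u t \<noteq> 1"
  shows "nichols_dim X r q = \<infinity>"
proof (rule nichols_dim_infinite[OF fin])
  have S: "{t, u} \<subseteq> X" using t u by simp
  have odd_step: "lin X (Suc (2 * n)) (qsym X r q (Suc (2 * n))) (skew_der q u (qcomm_pow q t u (Suc n))) \<noteq> 0"
    if "lin X (2 * n) (qsym X r q (2 * n)) (qcomm_pow q t u n) \<noteq> 0" for n
  proof (rule lin_qsym_Suc_nonzero[OF fin S trivial, of t])
    show "in_tensor_power {t, u} (Suc (2 * n)) (skew_der q u (qcomm_pow q t u (Suc n)))"
      using qcomm_pow_in_tensor_power[of t u "Suc n" q]
      by (intro skew_der_in_tensor_power) (simp_all del: qcomm_pow.simps)
    show "lin X (2 * n) (qsym X r q (2 * n)) (skew_der q t (skew_der q u (qcomm_pow q t u (Suc n)))) \<noteq> 0"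
      unfolding skew_der_skew_der_qcomm_pow[OF \<open>t \<noteq> u\<close> balanced] using that
      by (rule lin_scale_nonzero[rotated]) (use ne in \<open>simp del: of_nat_Suc\<close>)
  qed (rule insertI1)
  have even: "lin X (2 * n) (qsym X r q (2 * n)) (qcomm_pow q t u n) \<noteq> 0" for n
  proof (induction n)
    case 0
    then show ?case by (simp add: lin_def words_0 single_def fun_eq_iff)
  next
    case (Suc n)
    have deg: "2 * Suc n = Suc (Suc (2 * n))" by simp
    show ?case
      unfolding deg
      by (rule lin_qsym_Suc_nonzero[OF fin S trivial _ qcomm_pow_in_tensor_power[of t u "Suc n", unfolded deg]
            odd_step[OF Suc.IH]]) simp
  qed
  fix m
  show "\<exists>v. lin X m (qsym X r q m) v \<noteq> 0"
  proof (cases "even m")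
    case True
    then obtain h where m: "m = 2 * h" by (rule evenE)
    show ?thesis unfolding m using even[of h] by (rule exI[where x = "qcomm_pow q t u h"])
  next
    case False
    then obtain h where m: "m = Suc (2 * h)" by (auto elim: oddE)
    show ?thesis unfolding m using odd_step[OF even[of h]]
      by (rule exI[where x = "skew_der q u (qcomm_pow q t u (Suc h))"])
  qed
qed

section \<open>The \<open>k\<close>-cycle\<close>

lemma permutes_if_bij: "bij p \<Longrightarrow> (\<And>x. x \<notin> S \<Longrightarrow> p x = x) \<Longrightarrow> p permutes S"
  unfolding permutes_def using bij_iff by metis

lemma conj_inv_cancel:
  assumes "bij G" and "G \<circ> a \<circ> inv G = b"
  shows "inv G \<circ> b \<circ> G = a"
proof
  fix z
  have "b (G z) = G (a (inv G (G z)))" using fun_cong[OF assms(2), of "G z"] by simp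
  then show "(inv G \<circ> b \<circ> G) z = a z" using assms(1) by (simp add: bij_is_inj)
qed

lemma conj_comp:
  assumes "bij G"
  shows "(inv G \<circ> a \<circ> G) \<circ> (inv G \<circ> b \<circ> G) = inv G \<circ> (a \<circ> b) \<circ> G"
  using assms by (simp add: fun_eq_iff bij_is_surj surj_f_inv_f)

lemma conj_inv:
  assumes "bij G" and "bij a"
  shows "inv G \<circ> inv a \<circ> G = inv (inv G \<circ> a \<circ> G)"
  using assms by (simp add: o_inv_distrib bij_imp_bij_inv bij_comp inv_inv_eq o_assoc)

lemma conj_eq_self_if_commute:
  assumes "bij t" and "t \<circ> u = u \<circ> t"
  shows "t \<circ> u \<circ> inv t = u"
  using assms by (simp add: fun_eq_iff bij_is_surj surj_f_inv_f)

definition kcycle_inv :: "nat \<Rightarrow> perm" where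
  "kcycle_inv k = (\<lambda>i. if 1 < i \<and> i \<le> k then i - 1 else if i = 1 then k else i)"

definition reversal :: "nat \<Rightarrow> perm" where
  "reversal k = (\<lambda>i. if 1 \<le> i \<and> i \<le> k then k + 1 - i else i)"

lemma kcycle_comp_kcycle_inv: "k \<ge> 2 \<Longrightarrow> kcycle k \<circ> kcycle_inv k = id"
  and kcycle_inv_comp_kcycle: "k \<ge> 2 \<Longrightarrow> kcycle_inv k \<circ> kcycle k = id"
  by (auto simp: fun_eq_iff kcycle_def kcycle_inv_def)

lemma bij_kcycle: "k \<ge> 2 \<Longrightarrow> bij (kcycle k)"
  using o_bij kcycle_comp_kcycle_inv kcycle_inv_comp_kcycle by blast

lemma inv_kcycle: "k \<ge> 2 \<Longrightarrow> inv (kcycle k) = kcycle_inv k"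
  by (rule inv_unique_comp[OF kcycle_comp_kcycle_inv kcycle_inv_comp_kcycle])

lemma bij_kcycle_inv: "k \<ge> 2 \<Longrightarrow> bij (kcycle_inv k)"
  using bij_imp_bij_inv[OF bij_kcycle] inv_kcycle by metis

lemma kcycle_comm_kcycle_inv: "k \<ge> 2 \<Longrightarrow> kcycle k \<circ> kcycle_inv k = kcycle_inv k \<circ> kcycle k"
  by (simp add: kcycle_comp_kcycle_inv kcycle_inv_comp_kcycle)

lemma kcycle_permutes: "k \<ge> 2 \<Longrightarrow> kcycle k permutes {1..k}"
  by (rule permutes_if_bij[OF bij_kcycle]) (auto simp: kcycle_def)

lemma kcycle_ne_kcycle_inv: "k > 2 \<Longrightarrow> kcycle k \<noteq> kcycle_inv k"
  by (auto simp: fun_eq_iff kcycle_def kcycle_inv_def intro!: exI[of _ 1])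

lemma reversal_reversal: "reversal k \<circ> reversal k = id"
  by (auto simp: fun_eq_iff reversal_def)

lemma inv_reversal: "inv (reversal k) = reversal k"
  by (rule inv_unique_comp[OF reversal_reversal reversal_reversal])

lemma reversal_permutes: "reversal k permutes {1..k}"
  using o_bij[OF reversal_reversal reversal_reversal]
  by (rule permutes_if_bij) (auto simp: reversal_def)

lemma reversal_conj_kcycle: "k \<ge> 2 \<Longrightarrow> reversal k \<circ> kcycle k \<circ> inv (reversal k) = kcycle_inv k"
  unfolding inv_reversal by (auto simp: fun_eq_iff reversal_def kcycle_def kcycle_inv_def)

lemma finite_conj_class_Sk: "finite (conj_class (Sk k) s)"
proof -
  have "conj_class (Sk k) s = (\<lambda>g. g \<circ> s \<circ> inv g) ` Sk k"
    unfolding conj_class_def by blast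
  then show ?thesis unfolding Sk_def using finite_permutations[of "{1..k}"] by simp
qed

lemma conj_class_Sk_memI: "g permutes {1..k} \<Longrightarrow> g \<circ> s \<circ> inv g \<in> conj_class (Sk k) s"
  unfolding conj_class_def Sk_def by blast

lemma kcycle_in_conj_class: "kcycle k \<in> conj_class (Sk k) (kcycle k)"
  using conj_class_Sk_memI[where g = id, OF permutes_id] by simp

lemma kcycle_inv_in_conj_class: "k \<ge> 2 \<Longrightarrow> kcycle_inv k \<in> conj_class (Sk k) (kcycle k)"
  using conj_class_Sk_memI[OF reversal_permutes, where k = k and s = "kcycle k"] reversal_conj_kcycle
  by simp

lemma funpow_kcycle:
  assumes "k \<ge> 1"
  shows "(kcycle k ^^ j) i = (if 1 \<le> i \<and> i \<le> k then (i - 1 + j) mod k + 1 else i)"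
proof (induction j)
  case 0
  have "(i - 1) mod k = i - 1" if "1 \<le> i" "i \<le> k" using that by (intro mod_less) linarith
  then show ?case by auto
next
  case (Suc j)
  show ?case
  proof (cases "1 \<le> i \<and> i \<le> k")
    case True
    let ?m = "(i - 1 + j) mod k"
    have "?m < k" using assms by simp
    then have "kcycle k (?m + 1) = (if Suc ?m = k then 1 else ?m + 2)" by (auto simp: kcycle_def)
    also have "\<dots> = (i - 1 + Suc j) mod k + 1" by (simp only: add_Suc_right mod_Suc) auto
    finally show ?thesis using Suc True by simp
  next
    case False
    then have "(kcycle k ^^ j) i = i" unfolding Suc.IH by (rule if_not_P)
    moreover have "kcycle k i = i" using False assms by (auto simp: kcycle_def)
    ultimately show ?thesis by (simp only: funpow.simps(2) comp_apply if_not_P[OF False])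
  qed
qed

lemma funpow_kcycle_fixed: "k \<ge> 1 \<Longrightarrow> \<not> (1 \<le> i \<and> i \<le> k) \<Longrightarrow> (kcycle k ^^ j) i = i"
  by (metis funpow_kcycle)

lemma funpow_kcycle_order: "k \<ge> 1 \<Longrightarrow> kcycle k ^^ k = id"
proof
  fix i assume "k \<ge> 1"
  moreover have "(i - 1 + k) mod k = i - 1" if "1 \<le> i" "i \<le> k"
    using that by (simp only: mod_add_self2) (intro mod_less, linarith)
  ultimately show "(kcycle k ^^ k) i = id i"
    using funpow_kcycle[of k k i] by auto
qed

lemma funpow_kcycle_pred: "k \<ge> 2 \<Longrightarrow> kcycle k ^^ (k - 1) = kcycle_inv k"
proof (rule ext)
  fix i assume k: "k \<ge> 2"
  show "(kcycle k ^^ (k - 1)) i = kcycle_inv k i"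
  proof (cases "1 < i \<and> i \<le> k")
    case True
    then have "i - 1 + (k - 1) = (i - 2) + k" using k by simp
    then have "(i - 1 + (k - 1)) mod k = i - 2"
      using True by (simp only: mod_add_self2) (intro mod_less, linarith)
    moreover have "Suc (i - 2) = i - 1" using True by linarith
    ultimately show ?thesis using True k by (simp add: funpow_kcycle kcycle_inv_def)
  next
    case False
    then show ?thesis using k by (auto simp: funpow_kcycle kcycle_inv_def)
  qed
qed

lemma chi_kcycle:
  assumes "k \<ge> 2"
  shows "chi k \<omega> (kcycle k) = \<omega>"
proof -
  have "kcycle k \<noteq> id" using assms by (auto simp: fun_eq_iff kcycle_def intro!: exI[of _ 1])
  then have "(LEAST j. kcycle k ^^ j = kcycle k) = 1"
    by (intro Least_equality) (auto simp: not_less_eq_eq[symmetric])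
  then show ?thesis by (simp add: chi_def)
qed

lemma chi_kcycle_inv:
  assumes "k \<ge> 2"
  shows "chi k \<omega> (kcycle_inv k) = \<omega> ^ (k - 1)"
proof -
  have "(LEAST j. kcycle k ^^ j = kcycle_inv k) = k - 1"
  proof (rule Least_equality)
    show "kcycle k ^^ (k - 1) = kcycle_inv k" using funpow_kcycle_pred[OF assms] .
    fix j assume "kcycle k ^^ j = kcycle_inv k"
    then have "(kcycle k ^^ j) 1 = k" by (simp add: kcycle_inv_def)
    then have "j mod k + 1 = k" using assms by (simp add: funpow_kcycle)
    then show "k - 1 \<le> j" using mod_less_eq_dividend[of j k] by linarith
  qed
  then show ?thesis by (simp add: chi_def)
qed

lemma rack_conj_kcycle_kcycle_inv:
  assumes "k \<ge> 2"
  shows "\<forall>a\<in>{kcycle k, kcycle_inv k}. \<forall>b\<in>{kcycle k, kcycle_inv k}. rack_conj a b = b"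
  using conj_eq_self_if_commute[OF bij_kcycle[OF assms] refl]
    conj_eq_self_if_commute[OF bij_kcycle_inv[OF assms] refl]
    conj_eq_self_if_commute[OF bij_kcycle[OF assms] kcycle_comm_kcycle_inv[OF assms]]
    conj_eq_self_if_commute[OF bij_kcycle_inv[OF assms] kcycle_comm_kcycle_inv[OF assms, symmetric]]
  by (auto simp: rack_conj_def)

lemma funpow_commute:
  assumes "x \<circ> p = p \<circ> x"
  shows "x \<circ> p ^^ n = p ^^ n \<circ> x"
proof (induction n)
  case 0
  then show ?case by simp
next
  case (Suc n)
  have "x \<circ> p ^^ Suc n = (x \<circ> p) \<circ> p ^^ n" by (simp add: o_assoc funpow_Suc_right[symmetric] funpow_swap1)
  also have "\<dots> = p \<circ> (x \<circ> p ^^ n)" using assms by (simp add: o_assoc)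
  also have "\<dots> = p ^^ Suc n \<circ> x" by (metis Suc.IH comp_assoc funpow.simps(2))
  finally show ?case .
qed

lemma funpow_conj:
  assumes "bij H"
  shows "(H \<circ> p \<circ> inv H) ^^ n = H \<circ> p ^^ n \<circ> inv H"
  by (induction n) (auto simp: fun_eq_iff assms bij_is_inj bij_is_surj surj_f_inv_f)

lemma centralizer_kcycle:
  assumes k: "k \<ge> 2" and x: "x permutes {1..k}" and comm: "x \<circ> kcycle k = kcycle k \<circ> x"
  shows "x = kcycle k ^^ (x 1 - 1)"
proof
  fix i
  have x1: "1 \<le> x 1" "x 1 \<le> k" using permutes_in_image[OF x, of 1] k by auto
  show "x i = (kcycle k ^^ (x 1 - 1)) i"
  proof (cases "1 \<le> i \<and> i \<le> k")
    case True
    have "(i - 1) mod k = i - 1" using True by (intro mod_less) linarith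
    then have "x i = x ((kcycle k ^^ (i - 1)) 1)" using funpow_kcycle[of k "i - 1" 1] k True by simp
    also have "\<dots> = (kcycle k ^^ (i - 1)) (x 1)"
      using fun_cong[OF funpow_commute[OF comm, of "i - 1"], of 1] by simp
    also have "\<dots> = (kcycle k ^^ (x 1 - 1)) i"
      using funpow_kcycle[of k "i - 1" "x 1"] funpow_kcycle[of k "x 1 - 1" i] k x1 True
      by (simp add: add.commute)
    finally show ?thesis .
  next
    case False
    then have "x i = i" using permutes_not_in[OF x] by simp
    moreover have "(kcycle k ^^ (x 1 - 1)) i = i" using k False by (simp add: funpow_kcycle_fixed)
    ultimately show ?thesis by simp
  qed
qed

text \<open>If \<open>j\<close> were even, \<open>(\<pi>\<^sup>j)\<^bsup>k/2\<^esup>\<close> would be the identity, while the conjugate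
  \<open>(H \<pi> H\<^sup>-\<^sup>1)\<^bsup>k/2\<^esup>\<close> moves \<open>H 1\<close>.\<close>

lemma funpow_kcycle_conj_odd:
  assumes "even k" and k: "k \<ge> 2" and H: "bij H" and j: "kcycle k ^^ j = H \<circ> kcycle k \<circ> inv H"
  shows "odd j"
proof
  assume "even j"
  then obtain m where m: "j = 2 * m" ..
  obtain h where h: "k = 2 * h" using \<open>even k\<close> ..
  have "H \<circ> kcycle k ^^ h \<circ> inv H = kcycle k ^^ (j * h)"
    by (simp add: funpow_conj[OF H, symmetric] j[symmetric] funpow_mult)
  also have "\<dots> = (kcycle k ^^ k) ^^ m" by (simp add: funpow_mult m h ac_simps)
  also have "\<dots> = id" using k by (simp add: funpow_kcycle_order)
  finally have "(H \<circ> kcycle k ^^ h \<circ> inv H) (H 1) = H 1" by simp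
  then have "H ((kcycle k ^^ h) 1) = H 1" using H by (simp add: bij_is_inj)
  then have "(kcycle k ^^ h) 1 = 1" using H by (simp add: bij_is_inj inj_eq)
  moreover have "(kcycle k ^^ h) 1 = h + 1" using h k by (simp add: funpow_kcycle)
  ultimately show False using h k by simp
qed

lemma chi_minus_one_conj_kcycle:
  assumes "even k" and k: "k \<ge> 2" and x: "x permutes {1..k}" and comm: "x \<circ> kcycle k = kcycle k \<circ> x"
    and H: "bij H" and conj: "x = H \<circ> kcycle k \<circ> inv H"
  shows "chi k (-1) x = -1"
proof -
  have "\<exists>j. kcycle k ^^ j = x" using centralizer_kcycle[OF k x comm] by metis
  then have "kcycle k ^^ (LEAST j. kcycle k ^^ j = x) = x" by (rule LeastI_ex)
  then have "odd (LEAST j. kcycle k ^^ j = x)"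
    using funpow_kcycle_conj_odd[OF \<open>even k\<close> k H] conj by simp
  then show ?thesis by (simp add: chi_def)
qed

context
  fixes k :: nat and g :: "perm \<Rightarrow> perm"
  assumes k: "k > 2"
    and reps: "\<forall>t\<in>conj_class (Sk k) (kcycle k). g t \<in> Sk k \<and> g t \<circ> kcycle k \<circ> inv (g t) = t"
begin

lemma rep_permutes: "t \<in> conj_class (Sk k) (kcycle k) \<Longrightarrow> g t permutes {1..k}"
  using reps by (simp add: Sk_def)

lemma conj_class_kcycle_permutes: "t \<in> conj_class (Sk k) (kcycle k) \<Longrightarrow> t permutes {1..k}"
  using reps rep_permutes[of t] k
  by (metis permutes_compose permutes_inv kcycle_permutes less_imp_le_nat o_assoc)

lemma rep_conj: "t \<in> conj_class (Sk k) (kcycle k) \<Longrightarrow> inv (g t) \<circ> t \<circ> g t = kcycle k"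
  using reps rep_permutes[of t] by (intro conj_inv_cancel) (simp_all add: permutes_bij)

lemma rep_conj_inv: "t \<in> conj_class (Sk k) (kcycle k) \<Longrightarrow> inv (g t) \<circ> inv t \<circ> g t = kcycle_inv k"
proof -
  assume t: "t \<in> conj_class (Sk k) (kcycle k)"
  have "inv (g t) \<circ> inv t \<circ> g t = inv (inv (g t) \<circ> t \<circ> g t)"
    using t by (intro conj_inv permutes_bij[OF rep_permutes] permutes_bij[OF conj_class_kcycle_permutes])
  then show ?thesis using rep_conj[OF t] k by (simp add: inv_kcycle)
qed

lemma yd_coeff_commuting:
  assumes "t \<in> conj_class (Sk k) (kcycle k)" and "t \<circ> u = u \<circ> t"
  shows "yd_coeff g \<rho> t u = \<rho> (inv (g u) \<circ> t \<circ> g u)"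
  using conj_eq_self_if_commute[OF permutes_bij[OF conj_class_kcycle_permutes[OF assms(1)]] assms(2)]
  by (simp add: yd_coeff_def o_assoc)

lemma yd_coeff_kcycle_kcycle_inv:
  shows "yd_coeff g \<rho> (kcycle k) (kcycle k) = \<rho> (kcycle k)"
    and "yd_coeff g \<rho> (kcycle_inv k) (kcycle_inv k) = \<rho> (kcycle k)"
    and "yd_coeff g \<rho> (kcycle k) (kcycle_inv k) = \<rho> (kcycle_inv k)"
    and "yd_coeff g \<rho> (kcycle_inv k) (kcycle k) = \<rho> (kcycle_inv k)"
proof -
  have k2: "k \<ge> 2" using k by simp
  have p: "kcycle k \<in> conj_class (Sk k) (kcycle k)" and u: "kcycle_inv k \<in> conj_class (Sk k) (kcycle k)"
    using kcycle_in_conj_class kcycle_inv_in_conj_class[OF k2] .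
  have inv_p: "inv (kcycle k) = kcycle_inv k" and inv_u: "inv (kcycle_inv k) = kcycle k"
    using inv_kcycle[OF k2] inv_inv_eq[OF bij_kcycle[OF k2]] by simp_all
  note comm = kcycle_comm_kcycle_inv[OF k2]
  show "yd_coeff g \<rho> (kcycle k) (kcycle k) = \<rho> (kcycle k)"
    and "yd_coeff g \<rho> (kcycle_inv k) (kcycle_inv k) = \<rho> (kcycle k)"
    using yd_coeff_commuting[OF p refl] yd_coeff_commuting[OF u refl] rep_conj[OF p] rep_conj[OF u]
    by simp_all
  show "yd_coeff g \<rho> (kcycle k) (kcycle_inv k) = \<rho> (kcycle_inv k)"
    and "yd_coeff g \<rho> (kcycle_inv k) (kcycle k) = \<rho> (kcycle_inv k)"
    using yd_coeff_commuting[OF p comm] yd_coeff_commuting[OF u comm[symmetric]]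
      rep_conj_inv[OF u] rep_conj_inv[OF p] inv_p inv_u by simp_all
qed

lemma nichols_dim_kcycle_infinite:
  assumes "\<omega> ^ k = 1" and "\<omega> \<noteq> -1"
  shows "nichols_dim (conj_class (Sk k) (kcycle k)) rack_conj (yd_coeff g (chi k \<omega>)) = \<infinity>"
proof -
  let ?p = "kcycle k" and ?u = "kcycle_inv k" and ?q = "yd_coeff g (chi k \<omega>)"
  have k2: "k \<ge> 2" using k by simp
  have p: "?p \<in> conj_class (Sk k) (kcycle k)" and u: "?u \<in> conj_class (Sk k) (kcycle k)"
    using kcycle_in_conj_class kcycle_inv_in_conj_class[OF k2] .
  have q_diag: "?q ?p ?p = \<omega>" "?q ?u ?u = \<omega>"
    and q_off: "?q ?p ?u = \<omega> ^ (k - 1)" "?q ?u ?p = \<omega> ^ (k - 1)"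
    by (simp_all add: yd_coeff_kcycle_kcycle_inv chi_kcycle chi_kcycle_inv k2)
  have \<omega>_inverse: "\<omega> ^ (k - 1) * \<omega> = 1"
    using assms(1) k by (simp add: power_Suc2[symmetric])
  show ?thesis
  proof (cases "\<omega> = 1")
    case True
    then show ?thesis
      using rack_conj_kcycle_kcycle_inv[OF k2] q_diag
      by (intro nichols_dim_infinite_of_loop[OF finite_conj_class_Sk p]) simp_all
  next
    case False
    show ?thesis
    proof (rule nichols_dim_infinite_of_pair[OF finite_conj_class_Sk p u kcycle_ne_kcycle_inv[OF k]
          rack_conj_kcycle_kcycle_inv[OF k2]])
      have "\<omega> * \<omega> ^ (k - 1) * \<omega> ^ (k - 1) * \<omega> = (\<omega> ^ (k - 1) * \<omega>) * (\<omega> ^ (k - 1) * \<omega>)"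
        by (simp only: ac_simps)
      then show "?q ?p ?p * ?q ?p ?u * ?q ?u ?p * ?q ?u ?u = 1"
        unfolding q_diag q_off \<omega>_inverse by simp
      show "?q ?p ?u * ?q ?u ?p \<noteq> 1"
      proof
        assume "?q ?p ?u * ?q ?u ?p = 1"
        then have "\<omega>\<^sup>2 = (\<omega> ^ (k - 1) * \<omega>) * (\<omega> ^ (k - 1) * \<omega>)"
          unfolding q_off by (simp add: algebra_simps power2_eq_square)
        then have "\<omega>\<^sup>2 = 1" using \<omega>_inverse by simp
        then show False using False assms(2) by (simp add: power2_eq_1_iff)
      qed
    qed
  qed
qed

lemma chi_minus_one_rep_conj:
  assumes "even k" and t: "t \<in> conj_class (Sk k) (kcycle k)" and u: "u \<in> conj_class (Sk k) (kcycle k)"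
    and comm: "t \<circ> u = u \<circ> t"
  shows "chi k (-1) (inv (g u) \<circ> t \<circ> g u) = -1"
proof -
  let ?G = "g u" and ?H = "inv (g u) \<circ> g t"
  have G: "bij ?G" using rep_permutes[OF u] by (rule permutes_bij)
  have gt: "bij (g t)" using rep_permutes[OF t] by (rule permutes_bij)
  have H: "?H permutes {1..k}"
    using rep_permutes[OF t] rep_permutes[OF u] by (intro permutes_compose permutes_inv)
  have "inv ?H = inv (g t) \<circ> ?G"
    using o_inv_distrib[OF bij_imp_bij_inv[OF G] gt] inv_inv_eq[OF G] by simp
  moreover have "t y = g t (kcycle k (inv (g t) y))" for y
    using reps t by (metis comp_apply)
  ultimately have conj: "inv ?G \<circ> t \<circ> ?G = ?H \<circ> kcycle k \<circ> inv ?H"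
    by (simp add: fun_eq_iff)
  have "(inv ?G \<circ> t \<circ> ?G) \<circ> kcycle k = kcycle k \<circ> (inv ?G \<circ> t \<circ> ?G)"
    unfolding rep_conj[OF u, symmetric] conj_comp[OF G] comm ..
  moreover have "inv ?G \<circ> t \<circ> ?G permutes {1..k}"
    unfolding conj using k
    by (intro permutes_compose[OF permutes_inv[OF H] permutes_compose[OF kcycle_permutes H]]) simp
  ultimately show ?thesis
    using chi_minus_one_conj_kcycle[OF \<open>even k\<close> _ _ _ permutes_bij[OF H] conj] k by simp
qed

lemma negative_braiding_kcycle:
  assumes "even k"
  shows "negative_braiding (conj_class (Sk k) (kcycle k)) g (chi k (-1))"
  unfolding negative_braiding_def
proof (intro ballI impI conjI)
  fix t u
  assume t: "t \<in> conj_class (Sk k) (kcycle k)" and u: "u \<in> conj_class (Sk k) (kcycle k)"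
    and comm: "t \<circ> u = u \<circ> t"
  show "chi k (-1) (inv (g t) \<circ> t \<circ> g t) = -1"
    using chi_minus_one_rep_conj[OF assms t t refl] .
  show "chi k (-1) (inv (g u) \<circ> t \<circ> g u) * chi k (-1) (inv (g t) \<circ> u \<circ> g t) = 1"
    using chi_minus_one_rep_conj[OF assms t u comm] chi_minus_one_rep_conj[OF assms u t comm[symmetric]]
    by simp
qed

end

theorem proposition2p2:
  fixes k :: nat and \<omega> :: complex and g :: "perm \<Rightarrow> perm"
  assumes "even k" and "k > 2" and "\<omega> ^ k = 1"
    and "\<forall>t\<in>conj_class (Sk k) (kcycle k).
           g t \<in> Sk k \<and> g t \<circ> kcycle k \<circ> inv (g t) = t"
  shows "(\<omega> \<noteq> -1 \<longrightarrow>
           nichols_dim (conj_class (Sk k) (kcycle k)) rack_conj (yd_coeff g (chi k \<omega>)) = \<infinity>)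
       \<and> (\<omega> = -1 \<longrightarrow> negative_braiding (conj_class (Sk k) (kcycle k)) g (chi k \<omega>))"
  using nichols_dim_kcycle_infinite[OF assms(2,4,3)] negative_braiding_kcycle[OF assms(2,4,1)] by blast

end
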